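(* Assume that $(XX^T)^{-1}$ and $(X\Sigma^{-1}X^T)^{-1}$ exist with probability $1$ and that their expectations over $X$ exist. Then $b^w_l\le b^w_u$ and $v^w_l\ge v^w_u$.
   Context: Let $p>n$. The rows $x_1,\dots,x_n$ of $X\in\mathbb{R}^{n\times p}$ are i.i.d. from a distribution $P_x$ on $\mathbb{R}^p$ with $\mathbb{E}[x]=0$ and positive definite covariance $\Sigma=\mathrm{Var}(x)$, which is known. The responses are $Y=Xw+\epsilon$, where: - $w\in\mathbb{R}^p$ is random, independent of $X$, with $\mathbb{E}[w]=0$ and $\mathbb{E}[ww^T]=\tau^2I_p$; - $\epsilon\in\mathbb{R}^n$ has i.i.d. mean-zero entries of variance $\sigma^2$, independent of $(X,w)$. Define: - $b^w_l=\mathrm{tr}\big(\Sigma-\Sigma\mathbb{E}_X[X^T(XX^T)^{-1}X]\big)$; - $v^w_l=\mathrm{tr}\big(\Sigma\mathbb{E}_X[X^T(XX^T)^{-2}X]\big)$; - $b^w_u=\mathrm{tr}\big(\Sigma-\mathbb{E}_X[X^T(X\Sigma^{-1}X^T)^{-1}X]\big)$; - $v^w_u=\mathrm{tr}\big(\mathbb{E}_X[(X\Sigma^{-1}X^T)^{-1}]\big)$. These are the bias and variance coefficients (bias $\tau^2b$, variance $\sigma^2v$) of the reducible errors of, respectively, the minimum-norm interpolator $\hat w=X^T(XX^T)^{-1}Y$ and the minimum-variance interpolator $\tilde w=\Sigma^{-1}X^T(X\Sigma^{-1}X^T)^{-1}Y$. *)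

theory Defs
  imports "HOL-Probability.Probability"
begin

definition outer :: "real^'p \<Rightarrow> real^'p^'p" where
  "outer x = (\<chi> i j. x $ i * x $ j)"

definition pos_def_mat :: "real^'p^'p \<Rightarrow> bool" where
  "pos_def_mat S \<longleftrightarrow> transpose S = S \<and> (\<forall>v. v \<noteq> 0 \<longrightarrow> v \<bullet> (S *v v) > 0)"

text \<open>Bias/variance coefficients. M is the underlying probability space, X the random
  n x p design matrix (rows indexed by 'n), S the covariance Sigma; E_X is the integral over M.\<close>

definition b_wl :: "'w measure \<Rightarrow> ('w \<Rightarrow> real^'p^'n) \<Rightarrow> real^'p^'p \<Rightarrow> real" where
  "b_wl M X S = trace (S - S ** (\<integral>\<omega>. transpose (X \<omega>) ** matrix_inv (X \<omega> ** transpose (X \<omega>)) ** X \<omega> \<partial>M))"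

definition v_wl :: "'w measure \<Rightarrow> ('w \<Rightarrow> real^'p^'n) \<Rightarrow> real^'p^'p \<Rightarrow> real" where
  "v_wl M X S = trace (S ** (\<integral>\<omega>. transpose (X \<omega>) ** (matrix_inv (X \<omega> ** transpose (X \<omega>))
                    ** matrix_inv (X \<omega> ** transpose (X \<omega>))) ** X \<omega> \<partial>M))"

definition b_wu :: "'w measure \<Rightarrow> ('w \<Rightarrow> real^'p^'n) \<Rightarrow> real^'p^'p \<Rightarrow> real" where
  "b_wu M X S = trace (S - (\<integral>\<omega>. transpose (X \<omega>) ** matrix_inv (X \<omega> ** matrix_inv S ** transpose (X \<omega>)) ** X \<omega> \<partial>M))"

definition v_wu :: "'w measure \<Rightarrow> ('w \<Rightarrow> real^'p^'n) \<Rightarrow> real^'p^'p \<Rightarrow> real" where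
  "v_wu M X S = trace (\<integral>\<omega>. matrix_inv (X \<omega> ** matrix_inv S ** transpose (X \<omega>)) \<partial>M)"

end

theory Submission
  imports Defs
begin

text \<open>
  Write \<open>C = X \<Sigma>\<^sup>-\<^sup>1 X\<^sup>T\<close>. For every right inverse \<open>G\<close> of \<open>X\<close> (\<open>X G = I\<close>) one has the
  Gauss--Markov identity \<open>G\<^sup>T \<Sigma> G - C\<^sup>-\<^sup>1 = D\<^sup>T \<Sigma> D\<close> with \<open>D = G - \<Sigma>\<^sup>-\<^sup>1 X\<^sup>T C\<^sup>-\<^sup>1\<close>, so
  \<open>C\<^sup>-\<^sup>1 \<le> G\<^sup>T \<Sigma> G\<close> in the Loewner order. Taking the minimum-norm right inverse
  \<open>G = X\<^sup>T (X X\<^sup>T)\<^sup>-\<^sup>1\<close> and traces gives the variance inequality for every fixed \<open>X\<close>;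
  conjugating by \<open>X\<close> first gives the bias inequality, since then \<open>G X\<close> is the orthogonal
  projection \<open>P\<close> onto the row space of \<open>X\<close> and \<open>tr (P \<Sigma> P) = tr (\<Sigma> P)\<close>.
  Both inequalities survive taking expectations, because trace commutes with the integral
  once the matrices involved are shown integrable; this follows from positive
  semidefiniteness together with bounds on their traces. Besides positive definiteness
  of \<open>\<Sigma>\<close>, only the almost sure invertibility and the integrability hypotheses are used.
\<close>

lemma borel_measurable_matrix_mult [measurable]:
  fixes f :: "'w \<Rightarrow> real^'b^'a" and g :: "'w \<Rightarrow> real^'c^'b"
  assumes "f \<in> borel_measurable M" "g \<in> borel_measurable M"
  shows "(\<lambda>\<omega>. f \<omega> ** g \<omega>) \<in> borel_measurable M"
proof -
  have cont: "continuous_on UNIV (\<lambda>x. fst x ** (snd x :: real^'c^'b) :: real^'c^'a)"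
    unfolding matrix_matrix_mult_def by (intro continuous_intros)
  show ?thesis
    using borel_measurable_continuous_Pair[OF assms cont] by simp
qed

lemma borel_measurable_transpose [measurable]:
  fixes f :: "'w \<Rightarrow> real^'b^'a"
  assumes "f \<in> borel_measurable M"
  shows "(\<lambda>\<omega>. transpose (f \<omega>)) \<in> borel_measurable M"
proof -
  have "continuous_on UNIV (\<lambda>x::real^'b^'a. transpose x)"
    unfolding transpose_def by (intro continuous_intros)
  then show ?thesis
    using borel_measurable_continuous_on[OF _ assms] by blast
qed

lemma bounded_linear_trace_matrix_mult:
  "bounded_linear (\<lambda>A::real^'n^'n. trace (S ** A))"
proof -
  have "linear (\<lambda>A::real^'n^'n. trace (S ** A))"
    by (rule linearI)
      (simp_all add: matrix_add_ldistrib trace_add trace_def matrix_matrix_mult_def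
        sum_distrib_left algebra_simps sum.distrib)
  then show ?thesis
    by (simp add: linear_conv_bounded_linear)
qed

lemma trace_matrix_mult_integral:
  fixes f :: "'w \<Rightarrow> real^'n^'n"
  assumes "integrable M f"
  shows "trace (S ** (\<integral>\<omega>. f \<omega> \<partial>M)) = (\<integral>\<omega>. trace (S ** f \<omega>) \<partial>M)"
  using integral_bounded_linear[OF bounded_linear_trace_matrix_mult assms] by simp

lemma trace_integral:
  fixes f :: "'w \<Rightarrow> real^'n^'n"
  assumes "integrable M f"
  shows "trace (\<integral>\<omega>. f \<omega> \<partial>M) = (\<integral>\<omega>. trace (f \<omega>) \<partial>M)"
  using trace_matrix_mult_integral[OF assms, of "mat 1"] by simp

lemma integrable_trace:
  fixes f :: "'w \<Rightarrow> real^'n^'n"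
  assumes "integrable M f"
  shows "integrable M (\<lambda>\<omega>. trace (f \<omega>))"
  using integrable_bounded_linear[OF bounded_linear_trace_matrix_mult assms, of "mat 1"] by simp

lemma trace_integral_le_trace_matrix_mult_integral:
  fixes f :: "'w \<Rightarrow> real^'m^'m" and g :: "'w \<Rightarrow> real^'n^'n"
  assumes f: "integrable M f" and g: "integrable M g"
    and le: "AE \<omega> in M. trace (f \<omega>) \<le> trace (S ** g \<omega>)"
  shows "trace (\<integral>\<omega>. f \<omega> \<partial>M) \<le> trace (S ** (\<integral>\<omega>. g \<omega> \<partial>M))"
proof -
  have "integrable M (\<lambda>\<omega>. trace (f \<omega>))"
    using integrable_trace[OF f] .
  moreover have "integrable M (\<lambda>\<omega>. trace (S ** g \<omega>))"
    using integrable_bounded_linear[OF bounded_linear_trace_matrix_mult g] .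
  ultimately show ?thesis
    unfolding trace_integral[OF f] trace_matrix_mult_integral[OF g]
    using le by (rule integral_mono_AE)
qed

lemma matrix_inv_right:
  fixes A :: "'a::semiring_1^'n^'m"
  assumes "invertible A"
  shows "A ** matrix_inv A = mat 1"
  using someI_ex[OF assms[unfolded invertible_def]] unfolding matrix_inv_def by auto

lemma matrix_inv_left:
  fixes A :: "'a::semiring_1^'n^'m"
  assumes "invertible A"
  shows "matrix_inv A ** A = mat 1"
  using someI_ex[OF assms[unfolded invertible_def]] unfolding matrix_inv_def by auto

lemma matrix_inv_unique:
  fixes A B :: "real^'n^'n"
  assumes "A ** B = mat 1"
  shows "matrix_inv A = B"
proof -
  have "invertible A"
    using assms invertible_right_inverse by blast
  then have "matrix_inv A = matrix_inv A ** (A ** B)"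
    using assms by simp
  also have "\<dots> = B"
    by (simp add: matrix_mul_assoc matrix_inv_left[OF \<open>invertible A\<close>])
  finally show ?thesis .
qed

lemma transpose_matrix_inv_symmetric:
  fixes A :: "real^'n^'n"
  assumes "invertible A" "transpose A = A"
  shows "transpose (matrix_inv A) = matrix_inv A"
proof -
  have "transpose (matrix_inv A) ** A = mat 1"
    using matrix_inv_right[OF assms(1)] assms(2) by (metis matrix_transpose_mul transpose_mat)
  then have "A ** transpose (matrix_inv A) = mat 1"
    using matrix_left_right_inverse by blast
  then show ?thesis
    using matrix_inv_unique by metis
qed

lemma matrix_diff_ldistrib: "(C::'r::ring_1^'b^'a) ** (A - B) = C ** A - C ** B"
  by (simp add: matrix_matrix_mult_def vec_eq_iff algebra_simps sum_subtractf)

lemma matrix_diff_rdistrib: "((A::'r::ring_1^'b^'a) - B) ** C = A ** C - B ** C"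
  by (simp add: matrix_matrix_mult_def vec_eq_iff algebra_simps sum_subtractf)

lemma transpose_diff: "transpose ((A::'r::ab_group_add^'b^'a) - B) = transpose A - transpose B"
  by (simp add: transpose_def vec_eq_iff)

definition pos_semidef_mat :: "real^'n^'n \<Rightarrow> bool" where
  "pos_semidef_mat A \<longleftrightarrow> transpose A = A \<and> (\<forall>v. 0 \<le> v \<bullet> (A *v v))"

lemma pos_semidef_mat_if_pos_def_mat: "pos_def_mat A \<Longrightarrow> pos_semidef_mat A"
  unfolding pos_def_mat_def pos_semidef_mat_def
  by (metis inner_zero_left less_eq_real_def order_refl)

lemma invertible_if_pos_def_mat:
  fixes A :: "real^'n^'n"
  assumes "pos_def_mat A"
  shows "invertible A"
proof -
  have "\<forall>x. A *v x = 0 \<longrightarrow> x = 0"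
    using assms unfolding pos_def_mat_def by (metis inner_zero_right less_irrefl)
  then show ?thesis
    using matrix_left_invertible_ker invertible_left_inverse by blast
qed

lemma pos_semidef_mat_congruence:
  assumes "pos_semidef_mat A"
  shows "pos_semidef_mat (transpose B ** A ** B)"
proof -
  have "v \<bullet> ((transpose B ** A ** B) *v v) = (B *v v) \<bullet> (A *v (B *v v))" for v
  proof -
    have "v \<bullet> ((transpose B ** A ** B) *v v) = v \<bullet> (transpose B *v (A *v (B *v v)))"
      by (simp only: matrix_vector_mul_assoc matrix_mul_assoc)
    also have "\<dots> = ((A *v (B *v v)) v* B) \<bullet> v"
      by (simp add: inner_commute)
    also have "\<dots> = (A *v (B *v v)) \<bullet> (B *v v)"
      by (rule dot_lmul_matrix)
    finally show ?thesis
      by (simp add: inner_commute)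
  qed
  moreover have "transpose (transpose B ** A ** B) = transpose B ** A ** B"
    using assms unfolding pos_semidef_mat_def by (simp add: matrix_transpose_mul matrix_mul_assoc)
  ultimately show ?thesis
    using assms unfolding pos_semidef_mat_def by simp
qed

lemma pos_semidef_mat_id: "pos_semidef_mat (mat 1)"
  by (simp add: pos_semidef_mat_def inner_ge_zero)

lemma pos_semidef_mat_gram: "pos_semidef_mat (transpose B ** B)"
  using pos_semidef_mat_congruence[OF pos_semidef_mat_id] by simp

lemma pos_semidef_mat_matrix_inv:
  assumes "pos_semidef_mat A" "invertible A"
  shows "pos_semidef_mat (matrix_inv A)"
proof -
  have "transpose (matrix_inv A) = matrix_inv A"
    using transpose_matrix_inv_symmetric assms unfolding pos_semidef_mat_def by blast
  then have "matrix_inv A = transpose (matrix_inv A) ** A ** matrix_inv A"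
    by (simp add: matrix_inv_right[OF assms(2)] matrix_mul_assoc[symmetric])
  then show ?thesis
    using pos_semidef_mat_congruence[OF assms(1)] by metis
qed

lemma inner_axis_matrix_vector_mult_axis: "axis i 1 \<bullet> ((A::real^'n^'n) *v axis j 1) = A$i$j"
proof -
  have "axis i 1 \<bullet> (A *v axis j 1) = (\<Sum>k\<in>UNIV. (if k = i then A$k$j else 0))"
    unfolding inner_vec_def matrix_vector_mult_def axis_def
    by (intro sum.cong) (auto simp: if_distrib sum.delta cong: if_cong)
  then show ?thesis
    by simp
qed

lemma pos_semidef_mat_diag_nonneg:
  assumes "pos_semidef_mat A"
  shows "0 \<le> A$i$i"
proof -
  have "0 \<le> axis i 1 \<bullet> (A *v axis i 1)"
    using assms unfolding pos_semidef_mat_def by blast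
  then show ?thesis
    by (simp only: inner_axis_matrix_vector_mult_axis)
qed

lemma trace_nonneg_if_pos_semidef_mat: "pos_semidef_mat A \<Longrightarrow> 0 \<le> trace A"
  unfolding trace_def by (simp add: sum_nonneg pos_semidef_mat_diag_nonneg)

lemma trace_le_if_pos_semidef_mat_diff: "pos_semidef_mat (B - A) \<Longrightarrow> trace A \<le> trace B"
  using trace_nonneg_if_pos_semidef_mat[of "B - A"] by (simp add: trace_sub)

lemma pos_semidef_mat_diag_le_trace:
  assumes "pos_semidef_mat A"
  shows "A$i$i \<le> trace A"
  unfolding trace_def using pos_semidef_mat_diag_nonneg[OF assms] by (intro member_le_sum) auto

lemma pos_semidef_mat_entry_le_trace:
  assumes "pos_semidef_mat A"
  shows "\<bar>A$i$j\<bar> \<le> trace A"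
proof -
  have sym: "A$j$i = A$i$j"
    using assms unfolding pos_semidef_mat_def by (metis transpose_def vec_lambda_beta)
  define u where "u = axis i (1::real) + axis j 1"
  define w where "w = axis i (1::real) - axis j 1"
  have "0 \<le> u \<bullet> (A *v u)" "0 \<le> w \<bullet> (A *v w)"
    using assms unfolding pos_semidef_mat_def by blast+
  moreover have "u \<bullet> (A *v u) = A$i$i + A$j$j + 2 * A$i$j"
    unfolding u_def using sym
    by (simp add: algebra_simps inner_add_left inner_add_right inner_axis_matrix_vector_mult_axis)
  moreover have "w \<bullet> (A *v w) = A$i$i + A$j$j - 2 * A$i$j"
    unfolding w_def using sym
    by (simp add: algebra_simps inner_diff_left inner_diff_right inner_axis_matrix_vector_mult_axis)
  moreover have "A$i$i \<le> trace A" "A$j$j \<le> trace A"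
    using pos_semidef_mat_diag_le_trace[OF assms] by blast+
  ultimately show ?thesis
    by linarith
qed

lemma norm_le_trace_if_pos_semidef_mat:
  fixes A :: "real^'a^'a"
  assumes "pos_semidef_mat A"
  shows "norm A \<le> real CARD('a) * real CARD('a) * trace A"
proof -
  have "norm A \<le> (\<Sum>i\<in>UNIV. norm (A$i))"
    by (simp add: norm_vec_def L2_set_le_sum)
  also have "\<dots> \<le> (\<Sum>i\<in>UNIV. \<Sum>j\<in>UNIV. \<bar>A$i$j\<bar>)"
    by (intro sum_mono norm_le_l1_cart)
  also have "\<dots> \<le> (\<Sum>i\<in>(UNIV::'a set). \<Sum>j\<in>(UNIV::'a set). trace A)"
    by (intro sum_mono pos_semidef_mat_entry_le_trace assms)
  finally show ?thesis
    by simp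
qed

lemma integrable_pos_semidef_mat_trace_bounded:
  fixes f :: "'w \<Rightarrow> real^'a^'a"
  assumes "f \<in> borel_measurable M" "integrable M g"
    and "AE \<omega> in M. pos_semidef_mat (f \<omega>) \<and> trace (f \<omega>) \<le> g \<omega>"
  shows "integrable M f"
proof (rule Bochner_Integration.integrable_bound[OF _ assms(1)])
  show "integrable M (\<lambda>\<omega>. real CARD('a) * real CARD('a) * g \<omega>)"
    using assms(2) by simp
  show "AE \<omega> in M. norm (f \<omega>) \<le> norm (real CARD('a) * real CARD('a) * g \<omega>)"
    using assms(3)
  proof eventually_elim
    case (elim \<omega>)
    then have "norm (f \<omega>) \<le> real CARD('a) * real CARD('a) * trace (f \<omega>)"
      by (simp add: norm_le_trace_if_pos_semidef_mat)
    also have "\<dots> \<le> real CARD('a) * real CARD('a) * g \<omega>"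
      using elim by (intro mult_left_mono) simp_all
    finally have "norm (f \<omega>) \<le> real CARD('a) * real CARD('a) * g \<omega>" .
    then show ?case
      by simp
  qed
qed

lemma transpose_matrix_inv_congruence:
  fixes A :: "real^'m^'m" and B :: "real^'n^'m"
  assumes "transpose A = A" "invertible (transpose B ** A ** B)"
  shows "transpose (matrix_inv (transpose B ** A ** B)) = matrix_inv (transpose B ** A ** B)"
  using transpose_matrix_inv_symmetric[OF assms(2)] assms(1)
  by (simp add: matrix_transpose_mul matrix_mul_assoc)

lemma transpose_matrix_inv_gram:
  fixes X :: "real^'p^'n"
  assumes "invertible (X ** transpose X)"
  shows "transpose (matrix_inv (X ** transpose X)) = matrix_inv (X ** transpose X)"
  using transpose_matrix_inv_congruence[of "mat 1" "transpose X"] assms by simp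

abbreviation row_projection :: "real^'p^'n \<Rightarrow> real^'p^'p" where
  "row_projection X \<equiv> transpose X ** matrix_inv (X ** transpose X) ** X"

abbreviation weighted_row_projection :: "real^'p^'p \<Rightarrow> real^'p^'n \<Rightarrow> real^'p^'p" where
  "weighted_row_projection S X \<equiv> transpose X ** matrix_inv (X ** matrix_inv S ** transpose X) ** X"

lemma pos_semidef_mat_right_inverse_excess:
  fixes S :: "real^'p^'p" and X :: "real^'p^'n" and G :: "real^'n^'p"
  assumes S: "pos_semidef_mat S" "invertible S"
    and C: "invertible (X ** matrix_inv S ** transpose X)"
    and G: "X ** G = mat 1"
  shows "pos_semidef_mat (transpose G ** S ** G - matrix_inv (X ** matrix_inv S ** transpose X))"
proof -
  define Si where "Si = matrix_inv S"
  define Ci where "Ci = matrix_inv (X ** Si ** transpose X)"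
  define D where "D = G - Si ** transpose X ** Ci"
  have sym_S: "transpose S = S"
    using S(1) unfolding pos_semidef_mat_def by blast
  have sym_Si: "transpose Si = Si"
    unfolding Si_def using transpose_matrix_inv_symmetric[OF S(2) sym_S] .
  have sym_Ci: "transpose Ci = Ci"
    using transpose_matrix_inv_congruence[of Si "transpose X"] sym_Si C
    unfolding Ci_def Si_def by simp
  have cancel_S: "Z ** S ** Si = Z" "Z ** Si ** S = Z" for Z :: "real^'p^'c"
    using matrix_inv_right[OF S(2)] matrix_inv_left[OF S(2)] unfolding Si_def
    by (metis matrix_mul_assoc matrix_mul_rid)+
  have cancel_C: "Ci ** X ** Si ** transpose X = mat 1"
    using matrix_inv_left[OF C] unfolding Ci_def Si_def by (simp add: matrix_mul_assoc)
  have cancel_G: "Z ** X ** G = Z" for Z :: "real^'n^'c"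
    using G by (metis matrix_mul_assoc matrix_mul_rid)
  have cancel_Gt: "transpose G ** transpose X = mat 1"
    using G by (metis matrix_transpose_mul transpose_mat)
  have "transpose D ** S ** D = transpose G ** S ** G - Ci"
    unfolding D_def
    by (simp add: transpose_diff matrix_transpose_mul sym_Si sym_Ci matrix_mul_assoc
        matrix_diff_ldistrib matrix_diff_rdistrib cancel_S cancel_C cancel_G cancel_Gt)
  then show ?thesis
    using pos_semidef_mat_congruence[OF S(1), of D] unfolding Ci_def Si_def by simp
qed

lemma pos_semidef_mat_diff_weighted_row_projection:
  fixes S :: "real^'p^'p" and X :: "real^'p^'n"
  assumes S: "pos_semidef_mat S" "invertible S"
    and C: "invertible (X ** matrix_inv S ** transpose X)"
  shows "pos_semidef_mat (S - weighted_row_projection S X)"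
proof -
  define Si where "Si = matrix_inv S"
  define Ci where "Ci = matrix_inv (X ** Si ** transpose X)"
  define E where "E = mat 1 - Si ** transpose X ** Ci ** X"
  have sym_S: "transpose S = S"
    using S(1) unfolding pos_semidef_mat_def by blast
  have sym_Si: "transpose Si = Si"
    unfolding Si_def using transpose_matrix_inv_symmetric[OF S(2) sym_S] .
  have sym_Ci: "transpose Ci = Ci"
    using transpose_matrix_inv_congruence[of Si "transpose X"] sym_Si C
    unfolding Ci_def Si_def by simp
  have cancel_S: "S ** Si = mat 1" "Z ** S ** Si = Z" "Z ** Si ** S = Z" for Z :: "real^'p^'c"
    using matrix_inv_right[OF S(2)] matrix_inv_left[OF S(2)] unfolding Si_def
    by (metis matrix_mul_assoc matrix_mul_rid)+
  have cancel_C: "Z ** Ci ** X ** Si ** transpose X = Z" for Z :: "real^'n^'c"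
    using matrix_inv_left[OF C] unfolding Ci_def Si_def by (metis matrix_mul_assoc matrix_mul_rid)
  have "transpose E ** S ** E = S - transpose X ** Ci ** X"
    unfolding E_def
    by (simp add: transpose_diff matrix_transpose_mul sym_Si sym_S sym_Ci matrix_mul_assoc
        matrix_diff_ldistrib matrix_diff_rdistrib cancel_S cancel_C)
  then show ?thesis
    using pos_semidef_mat_congruence[OF S(1), of E] unfolding Ci_def Si_def by simp
qed

lemma min_norm_right_inverse:
  fixes X :: "real^'p^'n"
  assumes "invertible (X ** transpose X)"
  shows "X ** (transpose X ** matrix_inv (X ** transpose X)) = mat 1"
  using matrix_inv_right[OF assms] by (simp add: matrix_mul_assoc)

lemma pos_semidef_mat_row_projection:
  fixes X :: "real^'p^'n"
  assumes "invertible (X ** transpose X)"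
  shows "pos_semidef_mat (row_projection X)"
  using pos_semidef_mat_congruence[OF pos_semidef_mat_matrix_inv[OF _ assms], of X]
    pos_semidef_mat_gram[of "transpose X"]
  by simp

lemma trace_row_projection:
  fixes X :: "real^'p^'n"
  assumes "invertible (X ** transpose X)"
  shows "trace (row_projection X) = real CARD('n)"
proof -
  have "trace (row_projection X) = trace (matrix_inv (X ** transpose X) ** X ** transpose X)"
    by (metis matrix_mul_assoc trace_mul_sym)
  then show ?thesis
    by (simp add: matrix_inv_left[OF assms] matrix_mul_assoc[symmetric] trace_I)
qed

lemma pos_semidef_mat_weighted_row_projection:
  fixes S :: "real^'p^'p" and X :: "real^'p^'n"
  assumes S: "pos_semidef_mat S" "invertible S"
    and C: "invertible (X ** matrix_inv S ** transpose X)"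
  shows "pos_semidef_mat (weighted_row_projection S X)"
proof -
  have "pos_semidef_mat (X ** matrix_inv S ** transpose X)"
    using pos_semidef_mat_congruence[OF pos_semidef_mat_matrix_inv[OF S], of "transpose X"]
    by simp
  then show ?thesis
    using pos_semidef_mat_congruence[OF pos_semidef_mat_matrix_inv[OF _ C], of X] by simp
qed

lemma trace_weighted_row_projection_le:
  fixes S :: "real^'p^'p" and X :: "real^'p^'n"
  assumes "pos_semidef_mat S" "invertible S" "invertible (X ** matrix_inv S ** transpose X)"
  shows "trace (weighted_row_projection S X) \<le> trace S"
  using trace_le_if_pos_semidef_mat_diff pos_semidef_mat_diff_weighted_row_projection[OF assms] .

lemma pos_semidef_mat_min_norm_variance:
  fixes X :: "real^'p^'n"
  assumes "invertible (X ** transpose X)"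
  shows "pos_semidef_mat
    (transpose X ** (matrix_inv (X ** transpose X) ** matrix_inv (X ** transpose X)) ** X)"
  using pos_semidef_mat_gram[of "matrix_inv (X ** transpose X) ** X"]
  by (simp add: matrix_transpose_mul transpose_matrix_inv_gram[OF assms] matrix_mul_assoc)

lemma trace_min_norm_variance:
  fixes X :: "real^'p^'n"
  assumes "invertible (X ** transpose X)"
  shows "trace (transpose X ** (matrix_inv (X ** transpose X) ** matrix_inv (X ** transpose X)) ** X)
    = trace (matrix_inv (X ** transpose X))"
proof -
  define Bi where "Bi = matrix_inv (X ** transpose X)"
  have "trace (transpose X ** (Bi ** Bi) ** X) = trace (Bi ** (Bi ** X ** transpose X))"
    by (metis matrix_mul_assoc trace_mul_sym)
  then show ?thesis
    using matrix_inv_left[OF assms] unfolding Bi_def by (simp add: matrix_mul_assoc[symmetric])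
qed

lemma trace_weighted_row_projection_le_trace_mult_row_projection:
  fixes S :: "real^'p^'p" and X :: "real^'p^'n"
  assumes S: "pos_semidef_mat S" "invertible S"
    and B: "invertible (X ** transpose X)"
    and C: "invertible (X ** matrix_inv S ** transpose X)"
  shows "trace (weighted_row_projection S X) \<le> trace (S ** row_projection X)"
proof -
  define G where "G = transpose X ** matrix_inv (X ** transpose X)"
  define P where "P = G ** X"
  have P_eq: "P = row_projection X"
    unfolding P_def G_def ..
  have XG: "X ** G = mat 1"
    unfolding G_def using min_norm_right_inverse[OF B] .
  have "pos_semidef_mat (transpose X **
      (transpose G ** S ** G - matrix_inv (X ** matrix_inv S ** transpose X)) ** X)"
    using pos_semidef_mat_congruence[OF pos_semidef_mat_right_inverse_excess[OF S C XG]] .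
  then have "trace (weighted_row_projection S X)
      \<le> trace (transpose X ** (transpose G ** S ** G) ** X)"
    by (intro trace_le_if_pos_semidef_mat_diff) (simp add: matrix_diff_ldistrib matrix_diff_rdistrib)
  also have "transpose X ** (transpose G ** S ** G) ** X = transpose P ** S ** P"
    unfolding P_def by (simp add: matrix_transpose_mul matrix_mul_assoc)
  also have "transpose P = P"
    using pos_semidef_mat_row_projection[OF B] unfolding P_eq pos_semidef_mat_def by blast
  also have "trace (P ** S ** P) = trace (S ** (P ** P))"
    by (metis matrix_mul_assoc trace_mul_sym)
  also have "P ** P = P"
    unfolding P_def by (metis XG matrix_mul_assoc matrix_mul_rid)
  finally show ?thesis
    unfolding P_eq .
qed

lemma trace_min_variance_le_min_norm_variance:
  fixes S :: "real^'p^'p" and X :: "real^'p^'n"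
  assumes S: "pos_semidef_mat S" "invertible S"
    and B: "invertible (X ** transpose X)"
    and C: "invertible (X ** matrix_inv S ** transpose X)"
  shows "trace (matrix_inv (X ** matrix_inv S ** transpose X))
    \<le> trace (S **
      (transpose X ** (matrix_inv (X ** transpose X) ** matrix_inv (X ** transpose X)) ** X))"
proof -
  define Bi where "Bi = matrix_inv (X ** transpose X)"
  have "X ** (transpose X ** Bi) = mat 1"
    unfolding Bi_def using min_norm_right_inverse[OF B] .
  then have "trace (matrix_inv (X ** matrix_inv S ** transpose X))
      \<le> trace (transpose (transpose X ** Bi) ** S ** (transpose X ** Bi))"
    using trace_le_if_pos_semidef_mat_diff pos_semidef_mat_right_inverse_excess[OF S C] by blast
  also have "\<dots> = trace (Bi ** X ** S ** transpose X ** Bi)"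
    unfolding Bi_def
    by (simp add: matrix_transpose_mul transpose_matrix_inv_gram[OF B] matrix_mul_assoc)
  also have "\<dots> = trace (S ** (transpose X ** (Bi ** Bi) ** X))"
    by (metis matrix_mul_assoc trace_mul_sym)
  finally show ?thesis
    unfolding Bi_def .
qed

lemma integrable_row_projection:
  fixes X :: "'w \<Rightarrow> real^'p^'n"
  assumes "finite_measure M" "X \<in> borel_measurable M"
    and "(\<lambda>\<omega>. matrix_inv (X \<omega> ** transpose (X \<omega>))) \<in> borel_measurable M"
    and "AE \<omega> in M. invertible (X \<omega> ** transpose (X \<omega>))"
  shows "integrable M (\<lambda>\<omega>. row_projection (X \<omega>))"
  using assms(2-) finite_measure.integrable_const[OF assms(1)]
  by (intro integrable_pos_semidef_mat_trace_bounded[where g = "\<lambda>_. real CARD('n)"])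
    (auto elim!: eventually_mono simp: pos_semidef_mat_row_projection trace_row_projection)

lemma integrable_weighted_row_projection:
  fixes X :: "'w \<Rightarrow> real^'p^'n"
  assumes "finite_measure M" "pos_semidef_mat S" "invertible S" "X \<in> borel_measurable M"
    and "(\<lambda>\<omega>. matrix_inv (X \<omega> ** matrix_inv S ** transpose (X \<omega>))) \<in> borel_measurable M"
    and "AE \<omega> in M. invertible (X \<omega> ** matrix_inv S ** transpose (X \<omega>))"
  shows "integrable M (\<lambda>\<omega>. weighted_row_projection S (X \<omega>))"
  using assms(2-) finite_measure.integrable_const[OF assms(1)]
  by (intro integrable_pos_semidef_mat_trace_bounded[where g = "\<lambda>_. trace S"])
    (auto elim!: eventually_mono
      simp: pos_semidef_mat_weighted_row_projection trace_weighted_row_projection_le)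

lemma integrable_min_norm_variance:
  fixes X :: "'w \<Rightarrow> real^'p^'n"
  assumes "X \<in> borel_measurable M"
    and "integrable M (\<lambda>\<omega>. matrix_inv (X \<omega> ** transpose (X \<omega>)))"
    and "AE \<omega> in M. invertible (X \<omega> ** transpose (X \<omega>))"
  shows "integrable M (\<lambda>\<omega>. transpose (X \<omega>) **
    (matrix_inv (X \<omega> ** transpose (X \<omega>)) ** matrix_inv (X \<omega> ** transpose (X \<omega>))) ** X \<omega>)"
  using assms borel_measurable_integrable[OF assms(2)] integrable_trace[OF assms(2)]
  by (intro integrable_pos_semidef_mat_trace_bounded
        [where g = "\<lambda>\<omega>. trace (matrix_inv (X \<omega> ** transpose (X \<omega>)))"])
    (auto elim!: eventually_mono simp: pos_semidef_mat_min_norm_variance trace_min_norm_variance)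

theorem proposition4:
  fixes M :: "'w measure"
    and Px :: "(real^'p) measure"
    and X :: "'w \<Rightarrow> real^'p^'n"
    and S :: "real^'p^'p"
  assumes prob: "prob_space M"
    and pn: "CARD('n) < CARD('p)"
    and Px_prob: "prob_space Px" and Px_sets: "sets Px = sets borel"
    and X_meas: "X \<in> borel_measurable M"
    and rows_indep: "prob_space.indep_vars M (\<lambda>_. borel) (\<lambda>i \<omega>. X \<omega> $ i) UNIV"
    and rows_distr: "\<And>i. distr M borel (\<lambda>\<omega>. X \<omega> $ i) = Px"
    and mean_int: "integrable Px (\<lambda>x. x)" and mean_zero: "(\<integral>x. x \<partial>Px) = 0"
    and cov_int: "integrable Px outer" and cov: "S = (\<integral>x. outer x \<partial>Px)"
    and S_pd: "pos_def_mat S"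
    and inv1: "AE \<omega> in M. invertible (X \<omega> ** transpose (X \<omega>))"
    and inv2: "AE \<omega> in M. invertible (X \<omega> ** matrix_inv S ** transpose (X \<omega>))"
    and int1: "integrable M (\<lambda>\<omega>. matrix_inv (X \<omega> ** transpose (X \<omega>)))"
    and int2: "integrable M (\<lambda>\<omega>. matrix_inv (X \<omega> ** matrix_inv S ** transpose (X \<omega>)))"
  shows "b_wl M X S \<le> b_wu M X S \<and> v_wl M X S \<ge> v_wu M X S"
proof
  have S: "pos_semidef_mat S" "invertible S"
    using S_pd by (simp_all add: pos_semidef_mat_if_pos_def_mat invertible_if_pos_def_mat)
  have fin: "finite_measure M"
    using prob_space.finite_measure[OF prob] .
  have inv: "AE \<omega> in M. invertible (X \<omega> ** transpose (X \<omega>))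
      \<and> invertible (X \<omega> ** matrix_inv S ** transpose (X \<omega>))"
    using inv1 inv2 by eventually_elim simp
  have "trace (\<integral>\<omega>. weighted_row_projection S (X \<omega>) \<partial>M)
      \<le> trace (S ** (\<integral>\<omega>. row_projection (X \<omega>) \<partial>M))"
    using inv trace_weighted_row_projection_le_trace_mult_row_projection[OF S]
    by (intro trace_integral_le_trace_matrix_mult_integral
        integrable_weighted_row_projection[OF fin S X_meas borel_measurable_integrable[OF int2] inv2]
        integrable_row_projection[OF fin X_meas borel_measurable_integrable[OF int1] inv1])
      (auto elim: eventually_mono)
  then show "b_wl M X S \<le> b_wu M X S"
    unfolding b_wl_def b_wu_def trace_sub by simp
  show "v_wl M X S \<ge> v_wu M X S"
    unfolding v_wl_def v_wu_def
    using inv trace_min_variance_le_min_norm_variance[OF S]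
    by (intro trace_integral_le_trace_matrix_mult_integral int2
        integrable_min_norm_variance[OF X_meas int1 inv1])
      (auto elim: eventually_mono)
qed

end
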